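(* Let $R>0$ and $p>0$. Let $\mathcal G$ be a hypergraph, $U$ a set, and $\pi:V(\mathcal G)\to U$ a function with $|\pi(E)|=|E|$ for every $E\in\mathcal G$. Then for every $\vartheta:\pi(\mathcal G)\to\mathbb R_{\ge0}$, $$\Lambda_p(\vartheta\mathbin{\hat\circ}\pi)\le\Lambda_p(\vartheta).$$
   Context: A hypergraph is identified with its edge set; $\pi(\mathcal G)=\{\pi(E):E\in\mathcal G\}$ with vertex set $\pi(V(\mathcal G))$. For a measure $\nu$ on a hypergraph $\mathcal K$: $d_\nu(L)=\sum_{E\in\mathcal K,L\subset E}\nu(E)$ and $\Lambda_p(\nu)=\sum_{L\subset V(\mathcal K),|L|\ge2}d_\nu(L)^2p^{-|L|}$. The pullback $\vartheta\mathbin{\hat\circ}\pi:\mathcal G\to\mathbb R_{\ge0}$ is $\vartheta\mathbin{\hat\circ}\pi(E)=\vartheta(\pi(E))/|\{E_0\in\mathcal G:\pi(E_0)=\pi(E)\}|$. *)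

theory Defs
  imports Complex_Main
begin

text \<open>A hypergraph is given by its (finite) edge set K together with a finite vertex set V
  containing all edges. Measures are real functions on edges.\<close>

definition hdeg :: "'a set set \<Rightarrow> ('a set \<Rightarrow> real) \<Rightarrow> 'a set \<Rightarrow> real" where
  "hdeg K \<nu> L = (\<Sum>E\<in>{E\<in>K. L \<subseteq> E}. \<nu> E)"

definition Lambda :: "real \<Rightarrow> 'a set \<Rightarrow> 'a set set \<Rightarrow> ('a set \<Rightarrow> real) \<Rightarrow> real" where
  "Lambda p V K \<nu> = (\<Sum>L\<in>{L. L \<subseteq> V \<and> card L \<ge> 2}. (hdeg K \<nu> L)^2 * p powr (- real (card L)))"

definition pullback :: "('b set \<Rightarrow> real) \<Rightarrow> ('a \<Rightarrow> 'b) \<Rightarrow> 'a set set \<Rightarrow> 'a set \<Rightarrow> real" where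
  "pullback \<theta> \<pi> G E = \<theta> (\<pi> ` E) / real (card {E0\<in>G. \<pi> ` E0 = \<pi> ` E})"

end

theory Submission
  imports Defs
begin

text \<open>Since \<pi> is injective on every edge, only \<pi>-injective sets L have positive degree in G,
  and inside an edge E at most one set L is mapped onto a given M.  Hence the degrees of all L
  in the fibre over M sum to at most the pulled-back mass of the edges E with M \<subseteq> \<pi>(E), which
  is exactly the degree of M under \<vartheta>.  Grouping the terms of \<Lambda>_p of the pullback by
  M = \<pi>(L) and using that a sum of squares of nonnegative numbers is at most the square of
  their sum gives the claim.\<close>

definition Lambda_summand :: "real \<Rightarrow> 'a set set \<Rightarrow> ('a set \<Rightarrow> real) \<Rightarrow> 'a set \<Rightarrow> real" where
  "Lambda_summand p K \<nu> L = (hdeg K \<nu> L)^2 * p powr - real (card L)"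

lemma Lambda_eq_sum_Lambda_summand:
  "Lambda p V K \<nu> = sum (Lambda_summand p K \<nu>) {L. L \<subseteq> V \<and> card L \<ge> 2}"
  by (simp add: Lambda_def Lambda_summand_def)

lemma sum_power2_le_power2_sum:
  fixes f :: "'c \<Rightarrow> 'b::linordered_semidom"
  assumes "\<And>x. x \<in> A \<Longrightarrow> f x \<ge> 0"
  shows "(\<Sum>x\<in>A. (f x)^2) \<le> (\<Sum>x\<in>A. f x)^2"
proof (cases "finite A")
  case True
  have "(\<Sum>x\<in>A. (f x)^2) \<le> (\<Sum>x\<in>A. f x * sum f A)"
    using assms True
    by (intro sum_mono) (auto simp: power2_eq_square intro!: mult_left_mono member_le_sum)
  also have "\<dots> = (sum f A)^2"
    by (simp add: sum_distrib_right power2_eq_square)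
  finally show ?thesis .
qed simp

lemma inj_on_subsets_with_image_subset_singleton:
  assumes "inj_on f E"
  shows "{L. L \<subseteq> E \<and> f ` L = M} \<subseteq> {E \<inter> f -` M}"
  using assms by (auto simp: inj_on_def)

lemma hdeg_nonneg:
  assumes "\<And>E. E \<in> K \<Longrightarrow> \<nu> E \<ge> 0"
  shows "hdeg K \<nu> L \<ge> 0"
  unfolding hdeg_def using assms by (intro sum_nonneg) auto

lemma hdeg_eq_0_if_not_inj_on:
  assumes "\<forall>E\<in>K. inj_on f E" and "\<not> inj_on f L"
  shows "hdeg K \<nu> L = 0"
proof -
  have "{E\<in>K. L \<subseteq> E} = {}"
    using assms by (auto dest: inj_on_subset)
  then show ?thesis
    unfolding hdeg_def by (simp only: sum.empty)
qed

lemma sum_hdeg_eq: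
  assumes "finite A" and "finite K"
  shows "(\<Sum>L\<in>A. hdeg K \<nu> L) = (\<Sum>E\<in>K. real (card {L\<in>A. L \<subseteq> E}) * \<nu> E)"
  unfolding hdeg_def using sum.swap_restrict[OF assms, of "\<lambda>_ E. \<nu> E" "\<lambda>L E. L \<subseteq> E"]
  by simp

lemma pullback_nonneg:
  assumes "\<forall>F\<in>(\<lambda>E. \<pi> ` E) ` G. \<theta> F \<ge> 0" and "E \<in> G"
  shows "pullback \<theta> \<pi> G E \<ge> 0"
  using assms unfolding pullback_def by auto

lemma sum_pullback_fibre:
  assumes "finite G" and "E \<in> G"
  shows "(\<Sum>E0\<in>{E0\<in>G. \<pi> ` E0 = \<pi> ` E}. pullback \<theta> \<pi> G E0) = \<theta> (\<pi> ` E)"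
proof -
  define X where "X = {E0\<in>G. \<pi> ` E0 = \<pi> ` E}"
  have "card X > 0"
    using assms by (auto simp: X_def card_gt_0_iff)
  have "(\<Sum>E0\<in>X. pullback \<theta> \<pi> G E0) = (\<Sum>E0\<in>X. \<theta> (\<pi> ` E) / real (card X))"
    by (intro sum.cong) (auto simp: pullback_def X_def)
  also have "\<dots> = \<theta> (\<pi> ` E)"
    using \<open>card X > 0\<close> by simp
  finally show ?thesis
    by (simp add: X_def)
qed

lemma sum_pullback_image:
  assumes "finite G"
  shows "(\<Sum>E\<in>{E\<in>G. P (\<pi> ` E)}. pullback \<theta> \<pi> G E)
    = (\<Sum>F\<in>{F\<in>(\<lambda>E. \<pi> ` E) ` G. P F}. \<theta> F)"
proof -
  have "(\<Sum>E\<in>{E\<in>G. P (\<pi> ` E)}. pullback \<theta> \<pi> G E)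
      = (\<Sum>F\<in>{F\<in>(\<lambda>E. \<pi> ` E) ` G. P F}.
           \<Sum>E\<in>{E\<in>{E\<in>G. P (\<pi> ` E)}. \<pi> ` E = F}. pullback \<theta> \<pi> G E)"
    using assms by (intro sum.group[symmetric]) auto
  also have "\<dots> = (\<Sum>F\<in>{F\<in>(\<lambda>E. \<pi> ` E) ` G. P F}. \<theta> F)"
  proof (intro sum.cong refl)
    fix F
    assume "F \<in> {F\<in>(\<lambda>E. \<pi> ` E) ` G. P F}"
    then obtain E where "E \<in> G" "F = \<pi> ` E" "P F"
      by auto
    then have "{E0\<in>{E\<in>G. P (\<pi> ` E)}. \<pi> ` E0 = F} = {E0\<in>G. \<pi> ` E0 = \<pi> ` E}"
      by auto
    then show "(\<Sum>E\<in>{E\<in>{E\<in>G. P (\<pi> ` E)}. \<pi> ` E = F}. pullback \<theta> \<pi> G E) = \<theta> F"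
      using sum_pullback_fibre[OF assms \<open>E \<in> G\<close>] \<open>F = \<pi> ` E\<close> by simp
  qed
  finally show ?thesis .
qed

lemma sum_hdeg_pullback_fibre_le:
  assumes "finite G" and "\<forall>E\<in>G. inj_on \<pi> E" and "\<forall>F\<in>(\<lambda>E. \<pi> ` E) ` G. \<theta> F \<ge> 0"
    and "finite A" and "\<forall>L\<in>A. \<pi> ` L = M"
  shows "(\<Sum>L\<in>A. hdeg G (pullback \<theta> \<pi> G) L) \<le> hdeg ((\<lambda>E. \<pi> ` E) ` G) \<theta> M"
proof -
  let ?w = "pullback \<theta> \<pi> G"
  have "(\<Sum>L\<in>A. hdeg G ?w L) = (\<Sum>E\<in>G. real (card {L\<in>A. L \<subseteq> E}) * ?w E)"
    using assms(4,1) by (rule sum_hdeg_eq)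
  also have "\<dots> \<le> (\<Sum>E\<in>G. if M \<subseteq> \<pi> ` E then ?w E else 0)"
  proof (intro sum_mono)
    fix E
    assume "E \<in> G"
    show "real (card {L\<in>A. L \<subseteq> E}) * ?w E \<le> (if M \<subseteq> \<pi> ` E then ?w E else 0)"
    proof (cases "M \<subseteq> \<pi> ` E")
      case True
      have "{L\<in>A. L \<subseteq> E} \<subseteq> {L. L \<subseteq> E \<and> \<pi> ` L = M}"
        using assms(5) by auto
      also have "\<dots> \<subseteq> {E \<inter> \<pi> -` M}"
        using assms(2) \<open>E \<in> G\<close> by (simp add: inj_on_subsets_with_image_subset_singleton)
      finally have "card {L\<in>A. L \<subseteq> E} \<le> card {E \<inter> \<pi> -` M}"
        by (intro card_mono) simp_all
      then have "real (card {L\<in>A. L \<subseteq> E}) \<le> 1"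
        by simp
      then show ?thesis
        using True mult_left_le_one_le[OF pullback_nonneg[OF assms(3) \<open>E \<in> G\<close>]] by simp
    next
      case False
      then have "{L\<in>A. L \<subseteq> E} = {}"
        using assms(5) by auto
      then have "card {L\<in>A. L \<subseteq> E} = 0"
        by (simp only: card.empty)
      then show ?thesis
        using False by simp
    qed
  qed
  also have "\<dots> = (\<Sum>E\<in>{E\<in>G. M \<subseteq> \<pi> ` E}. ?w E)"
    using assms(1) by (rule sum.inter_filter[symmetric])
  also have "\<dots> = hdeg ((\<lambda>E. \<pi> ` E) ` G) \<theta> M"
    unfolding hdeg_def using assms(1) by (rule sum_pullback_image)
  finally show ?thesis .
qed

lemma sum_Lambda_summand_fibre_le:
  assumes "finite G" and "\<forall>E\<in>G. inj_on \<pi> E" and "\<forall>F\<in>(\<lambda>E. \<pi> ` E) ` G. \<theta> F \<ge> 0"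
    and "finite A" and "\<forall>L\<in>A. inj_on \<pi> L \<and> \<pi> ` L = M"
  shows "(\<Sum>L\<in>A. Lambda_summand p G (pullback \<theta> \<pi> G) L)
    \<le> Lambda_summand p ((\<lambda>E. \<pi> ` E) ` G) \<theta> M"
proof -
  let ?d = "hdeg G (pullback \<theta> \<pi> G)"
  have d_nonneg: "?d L \<ge> 0" for L
    using assms(3) by (intro hdeg_nonneg pullback_nonneg) auto
  have "(\<Sum>L\<in>A. Lambda_summand p G (pullback \<theta> \<pi> G) L)
      = (\<Sum>L\<in>A. (?d L)^2) * p powr - real (card M)"
    unfolding sum_distrib_right Lambda_summand_def using assms(5)
    by (intro sum.cong) (auto simp: card_image)
  also have "\<dots> \<le> (\<Sum>L\<in>A. ?d L)^2 * p powr - real (card M)"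
    using d_nonneg by (intro mult_right_mono sum_power2_le_power2_sum) auto
  also have "\<dots> \<le> (hdeg ((\<lambda>E. \<pi> ` E) ` G) \<theta> M)^2 * p powr - real (card M)"
    using assms d_nonneg
    by (intro mult_right_mono power_mono sum_hdeg_pullback_fibre_le sum_nonneg) auto
  finally show ?thesis
    unfolding Lambda_summand_def .
qed

theorem lemmaC2:
  fixes R p :: real and V :: "'a set" and G :: "'a set set" and U :: "'b set"
    and \<pi> :: "'a \<Rightarrow> 'b" and \<theta> :: "'b set \<Rightarrow> real"
  assumes "R > 0" and "p > 0"
    and "finite V" and "\<forall>E\<in>G. E \<subseteq> V"
    and "\<pi> ` V \<subseteq> U"
    and "\<forall>E\<in>G. card (\<pi> ` E) = card E"
    and "\<forall>F\<in>(\<lambda>E. \<pi> ` E) ` G. \<theta> F \<ge> 0"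
  shows "Lambda p V G (pullback \<theta> \<pi> G) \<le> Lambda p (\<pi> ` V) ((\<lambda>E. \<pi> ` E) ` G) \<theta>"
proof -
  define S where "S = {L. L \<subseteq> V \<and> card L \<ge> 2}"
  define S_inj where "S_inj = {L\<in>S. inj_on \<pi> L}"
  define T where "T = {M. M \<subseteq> \<pi> ` V \<and> card M \<ge> 2}"
  have "finite G" "finite S" "finite T"
    using assms(3,4) by (auto simp: S_def T_def intro: finite_subset[of _ "Pow _"])
  then have "finite S_inj"
    by (simp add: S_inj_def)
  have inj_edges: "\<forall>E\<in>G. inj_on \<pi> E"
    using assms(3,4,6) by (metis eq_card_imp_inj_on finite_subset)
  have "Lambda p V G (pullback \<theta> \<pi> G) = sum (Lambda_summand p G (pullback \<theta> \<pi> G)) S_inj"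
    unfolding Lambda_eq_sum_Lambda_summand using \<open>finite S\<close>
    by (intro sum.mono_neutral_right)
      (auto simp: S_def S_inj_def Lambda_summand_def hdeg_eq_0_if_not_inj_on[OF inj_edges])
  also have "\<dots> = (\<Sum>M\<in>T. sum (Lambda_summand p G (pullback \<theta> \<pi> G)) {L\<in>S_inj. \<pi> ` L = M})"
    using \<open>finite S_inj\<close> \<open>finite T\<close>
    by (intro sum.group[symmetric]) (auto simp: S_inj_def S_def T_def card_image)
  also have "\<dots> \<le> (\<Sum>M\<in>T. Lambda_summand p ((\<lambda>E. \<pi> ` E) ` G) \<theta> M)"
    using \<open>finite G\<close> \<open>finite S\<close> inj_edges assms(7)
    by (intro sum_mono sum_Lambda_summand_fibre_le) (auto simp: S_inj_def)
  also have "\<dots> = Lambda p (\<pi> ` V) ((\<lambda>E. \<pi> ` E) ` G) \<theta>"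
    unfolding Lambda_eq_sum_Lambda_summand T_def ..
  finally show ?thesis .
qed

end
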